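(* Let $T$ be a complete theory with monster model $\mathcal{U}$, $A\subseteq\mathcal{U}$ small, $\mu\in\mathfrak{M}_x(\mathcal{U})$, $\nu\in\mathfrak{M}_y(\mathcal{U})$, and suppose $\lambda\in\mathfrak{M}_{xy}(A)$ witnesses $\mu\geq_{\mathbb{E},A}\nu$. If $\lambda$ is smooth over $A$, then both $\mu$ and $\nu$ are smooth over $A$.
   Context: For $C\subseteq\mathcal{U}$, $\mathcal{L}_x(C)$ is the Boolean algebra of formulas in $x$ with parameters from $C$ modulo $T$, embedded in $\mathcal{L}_{xy}(C)$ via $\varphi(x)\mapsto\varphi(x)\wedge y=y$; $\mathfrak{M}_x(C)$ is the set of finitely additive probability measures on $\mathcal{L}_x(C)$. For $\omega\in\mathfrak{M}_{xy}(C)$, $\pi_x(\omega)(\varphi(x))=\omega(\varphi(x)\wedge y=y)$ (similarly $\pi_y$); $\omega|_D$ is restriction. $\lambda$ witnesses $\mu\geq_{\mathbb{E},A}\nu$ means $\pi_x(\lambda)=\mu|_A$ and every $\omega\in\mathfrak{M}_{xy}(\mathcal{U})$ with $\omega|_A=\lambda$ and $\pi_x(\omega)=\mu$ satisfies $\pi_y(\omega)=\nu$. A global measure is smooth over $A$ if it is the unique global measure with its restriction to $A$. A measure $\eta\in\mathfrak{M}_{xy}(A)$ is smooth over $A$ if there is a unique $\omega\in\mathfrak{M}_{xy}(\mathcal{U})$ with $\omega|_A=\eta$. *)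

theory Defs
  imports Complex_Main
begin

datatype 'f trm = Var nat | Fn 'f "'f trm list"

datatype ('f, 'r) fm =
    Eq "'f trm" "'f trm"
  | Rel 'r "'f trm list"
  | Neg "('f, 'r) fm"
  | Conj "('f, 'r) fm" "('f, 'r) fm"
  | Ex nat "('f, 'r) fm"

text \<open>A structure whose universe is the whole type 'u (the monster model).\<close>
record ('f, 'r, 'u) struc =
  funs :: "'f \<Rightarrow> 'u list \<Rightarrow> 'u"
  rels :: "'r \<Rightarrow> 'u list \<Rightarrow> bool"

fun tval :: "('f, 'r, 'u) struc \<Rightarrow> (nat \<Rightarrow> 'u) \<Rightarrow> 'f trm \<Rightarrow> 'u" where
  "tval M e (Var v) = e v"
| "tval M e (Fn f ts) = funs M f (map (tval M e) ts)"

fun sat :: "('f, 'r, 'u) struc \<Rightarrow> ('f, 'r) fm \<Rightarrow> (nat \<Rightarrow> 'u) \<Rightarrow> bool" where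
  "sat M (Eq s t) e = (tval M e s = tval M e t)"
| "sat M (Rel r ts) e = rels M r (map (tval M e) ts)"
| "sat M (Neg p) e = (\<not> sat M p e)"
| "sat M (Conj p q) e = (sat M p e \<and> sat M q e)"
| "sat M (Ex v p) e = (\<exists>a. sat M p (e(v := a)))"

fun tvars :: "'f trm \<Rightarrow> nat set" where
  "tvars (Var v) = {v}"
| "tvars (Fn f ts) = (\<Union>t\<in>set ts. tvars t)"

fun fvars :: "('f, 'r) fm \<Rightarrow> nat set" where
  "fvars (Eq s t) = tvars s \<union> tvars t"
| "fvars (Rel r ts) = (\<Union>t\<in>set ts. tvars t)"
| "fvars (Neg p) = fvars p"
| "fvars (Conj p q) = fvars p \<union> fvars q"
| "fvars (Ex v p) = fvars p - {v}"

section \<open>Definable sets: the algebra L_k(C) of formulas in k variables with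
  parameters from C modulo T = Th(U), represented by the sets they define in U^k
  (tuples are lists of length k)\<close>

definition definable :: "('f, 'r, 'u) struc \<Rightarrow> 'u set \<Rightarrow> nat \<Rightarrow> 'u list set \<Rightarrow> bool" where
  "definable M C k X \<longleftrightarrow>
     (\<exists>(\<phi> :: ('f, 'r) fm) ps. set ps \<subseteq> C \<and> (\<forall>v\<in>fvars \<phi>. v < k + length ps) \<and>
        X = {a. length a = k \<and> sat M \<phi> (\<lambda>i. (a @ ps) ! i)})"

definition saturated :: "('f, 'r, 'u) struc \<Rightarrow> 'k rel \<Rightarrow> bool" where
  "saturated M \<kappa> \<longleftrightarrow>
     (\<forall>B F. (card_of B, \<kappa>) \<in> ordLess \<and> (\<forall>X\<in>F. definable M B 1 X) \<and>
        (\<forall>G. finite G \<and> G \<subseteq> F \<longrightarrow> {a. length a = 1} \<inter> \<Inter>G \<noteq> {})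
        \<longrightarrow> {a. length a = 1} \<inter> \<Inter>F \<noteq> {})"

definition automorphism :: "('f, 'r, 'u) struc \<Rightarrow> ('u \<Rightarrow> 'u) \<Rightarrow> bool" where
  "automorphism M g \<longleftrightarrow> bij g \<and> (\<forall>(\<phi> :: ('f, 'r) fm) e. sat M \<phi> e = sat M \<phi> (g \<circ> e))"

definition partial_elementary :: "('f, 'r, 'u) struc \<Rightarrow> 'u set \<Rightarrow> ('u \<Rightarrow> 'u) \<Rightarrow> bool" where
  "partial_elementary M B f \<longleftrightarrow>
     (\<forall>(\<phi> :: ('f, 'r) fm) e. (\<forall>i. e i \<in> B) \<longrightarrow> sat M \<phi> e = sat M \<phi> (f \<circ> e))"

definition strongly_homogeneous :: "('f, 'r, 'u) struc \<Rightarrow> 'k rel \<Rightarrow> bool" where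
  "strongly_homogeneous M \<kappa> \<longleftrightarrow>
     (\<forall>B f. (card_of B, \<kappa>) \<in> ordLess \<and> partial_elementary M B f \<longrightarrow>
        (\<exists>g. automorphism M g \<and> (\<forall>b\<in>B. g b = f b)))"

definition monster :: "('f, 'r, 'u) struc \<Rightarrow> 'k rel \<Rightarrow> bool" where
  "monster M \<kappa> \<longleftrightarrow> Card_order \<kappa> \<and> \<not> finite (Field \<kappa>) \<and>
     (card_of (UNIV :: ('f + 'r) set), \<kappa>) \<in> ordLess \<and>
     saturated M \<kappa> \<and> strongly_homogeneous M \<kappa>"

definition small :: "'k rel \<Rightarrow> 'u set \<Rightarrow> bool" where
  "small \<kappa> A \<longleftrightarrow> (card_of A, \<kappa>) \<in> ordLess"

text \<open>Finitely additive probability measure on L_k(C); only its values on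
  C-definable sets matter.\<close>
definition keisler :: "('f, 'r, 'u) struc \<Rightarrow> 'u set \<Rightarrow> nat \<Rightarrow> ('u list set \<Rightarrow> real) \<Rightarrow> bool" where
  "keisler M C k \<mu> \<longleftrightarrow>
     (\<forall>X. definable M C k X \<longrightarrow> 0 \<le> \<mu> X) \<and>
     \<mu> {a. length a = k} = 1 \<and>
     (\<forall>X Y. definable M C k X \<and> definable M C k Y \<and> X \<inter> Y = {} \<longrightarrow> \<mu> (X \<union> Y) = \<mu> X + \<mu> Y)"

definition agree :: "('f, 'r, 'u) struc \<Rightarrow> 'u set \<Rightarrow> nat \<Rightarrow> ('u list set \<Rightarrow> real) \<Rightarrow> ('u list set \<Rightarrow> real) \<Rightarrow> bool" where
  "agree M C k \<mu> \<nu> \<longleftrightarrow> (\<forall>X. definable M C k X \<longrightarrow> \<mu> X = \<nu> X)"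

text \<open>Projections for x of length n, y of length m, xy the concatenation:
  phi(x) corresponds to phi(x) and y = y.\<close>
definition pi_x :: "nat \<Rightarrow> nat \<Rightarrow> ('u list set \<Rightarrow> real) \<Rightarrow> ('u list set \<Rightarrow> real)" where
  "pi_x n m \<omega> = (\<lambda>X. \<omega> {a @ b | a b. a \<in> X \<and> length a = n \<and> length b = m})"

definition pi_y :: "nat \<Rightarrow> nat \<Rightarrow> ('u list set \<Rightarrow> real) \<Rightarrow> ('u list set \<Rightarrow> real)" where
  "pi_y n m \<omega> = (\<lambda>Y. \<omega> {a @ b | a b. b \<in> Y \<and> length a = n \<and> length b = m})"

definition witnesses :: "('f, 'r, 'u) struc \<Rightarrow> 'u set \<Rightarrow> nat \<Rightarrow> nat \<Rightarrow>
    ('u list set \<Rightarrow> real) \<Rightarrow> ('u list set \<Rightarrow> real) \<Rightarrow> ('u list set \<Rightarrow> real) \<Rightarrow> bool" where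
  "witnesses M A n m lam \<mu> \<nu> \<longleftrightarrow>
     agree M A n (pi_x n m lam) \<mu> \<and>
     (\<forall>\<omega>. keisler M UNIV (n + m) \<omega> \<and> agree M A (n + m) \<omega> lam \<and> agree M UNIV n (pi_x n m \<omega>) \<mu>
        \<longrightarrow> agree M UNIV m (pi_y n m \<omega>) \<nu>)"

definition smooth_global :: "('f, 'r, 'u) struc \<Rightarrow> 'u set \<Rightarrow> nat \<Rightarrow> ('u list set \<Rightarrow> real) \<Rightarrow> bool" where
  "smooth_global M A k \<mu> \<longleftrightarrow>
     (\<forall>\<mu>'. keisler M UNIV k \<mu>' \<and> agree M A k \<mu>' \<mu> \<longrightarrow> agree M UNIV k \<mu>' \<mu>)"

definition smooth_local :: "('f, 'r, 'u) struc \<Rightarrow> 'u set \<Rightarrow> nat \<Rightarrow> ('u list set \<Rightarrow> real) \<Rightarrow> bool" where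
  "smooth_local M A k \<eta> \<longleftrightarrow>
     (\<exists>\<omega>. keisler M UNIV k \<omega> \<and> agree M A k \<omega> \<eta>) \<and>
     (\<forall>\<omega> \<omega>'. keisler M UNIV k \<omega> \<and> agree M A k \<omega> \<eta> \<and>
             keisler M UNIV k \<omega>' \<and> agree M A k \<omega>' \<eta> \<longrightarrow> agree M UNIV k \<omega> \<omega>')"

end

theory Submission
  imports Defs "HOL-Analysis.Sigma_Algebra"
begin

text \<open>
  A finitely additive measure on an algebra of sets extends to any further set \<open>Z\<close> with value the
  outer measure of \<open>Z\<close>, and then, by Zorn's lemma, to all subsets. So if \<open>\<lambda>\<close> is smooth, the outer
  \<open>\<lambda>\<close>-measures of a global definable set \<open>Z\<close> and of its complement add up to \<open>1\<close>: every such \<open>Z\<close>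
  is squeezed between \<open>A\<close>-definable sets \<open>W\<^sub>1 \<subseteq> Z \<subseteq> W\<^sub>2\<close> with \<open>\<lambda>(W\<^sub>2) - \<lambda>(W\<^sub>1)\<close> arbitrarily small.

  For a cylinder \<open>Z\<close> over a set \<open>X\<close> of \<open>x\<close>-tuples, the projection \<open>P\<^sub>1\<close> of \<open>W\<^sub>1\<close> and the complement
  \<open>P\<^sub>2\<close> of the projection of the complement of \<open>W\<^sub>2\<close> are \<open>A\<close>-definable, \<open>P\<^sub>1 \<subseteq> X \<subseteq> P\<^sub>2\<close>, and their
  cylinders lie between \<open>W\<^sub>1\<close> and \<open>W\<^sub>2\<close>. Hence any global measure that agrees over \<open>A\<close> with the
  push-forward \<open>\<pi>\<^sub>x(\<omega>)\<close> of the unique global extension \<open>\<omega>\<close> of \<open>\<lambda>\<close> coincides with it, i.e.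
  \<open>\<pi>\<^sub>x(\<omega>)\<close> is smooth, and likewise \<open>\<pi>\<^sub>y(\<omega>)\<close>. Now \<open>\<mu>\<close> agrees with \<open>\<pi>\<^sub>x(\<omega>)\<close> over \<open>A\<close>, so
  \<open>\<mu> = \<pi>\<^sub>x(\<omega>)\<close>, and then the witness property gives \<open>\<nu> = \<pi>\<^sub>y(\<omega>)\<close>.
\<close>

section \<open>Extending finitely additive measures\<close>

locale fa_measure = algebra \<Omega> D for \<Omega> :: "'a set" and D +
  fixes w :: "'a set \<Rightarrow> real"
  assumes nonneg: "X \<in> D \<Longrightarrow> 0 \<le> w X"
    and additive: "X \<in> D \<Longrightarrow> Y \<in> D \<Longrightarrow> X \<inter> Y = {} \<Longrightarrow> w (X \<union> Y) = w X + w Y"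

definition fa_outer :: "'a set set \<Rightarrow> ('a set \<Rightarrow> real) \<Rightarrow> 'a set \<Rightarrow> real" where
  "fa_outer D w E = (INF Y\<in>{Y\<in>D. E \<subseteq> Y}. w Y)"

definition fa_inner :: "'a set set \<Rightarrow> ('a set \<Rightarrow> real) \<Rightarrow> 'a set \<Rightarrow> real" where
  "fa_inner D w E = (SUP Y\<in>{Y\<in>D. Y \<subseteq> E}. w Y)"

context fa_measure
begin

lemma empty_zero: "w {} = 0"
  using additive[of "{}" "{}"] by simp

lemma add_Int_Diff: "X \<in> D \<Longrightarrow> Y \<in> D \<Longrightarrow> w X = w (X \<inter> Y) + w (X - Y)"
  using additive[of "X \<inter> Y" "X - Y"] by (simp add: Int Diff Int_Diff_Un Int_Diff_disjoint)

lemma mono: "X \<in> D \<Longrightarrow> Y \<in> D \<Longrightarrow> X \<subseteq> Y \<Longrightarrow> w X \<le> w Y"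
  using add_Int_Diff[of Y X] nonneg[of "Y - X"] by (simp add: Diff Int_absorb1 Int_absorb2 Int_commute)

lemma subadditive: "X \<in> D \<Longrightarrow> Y \<in> D \<Longrightarrow> w (X \<union> Y) \<le> w X + w Y"
  using additive[of X "Y - X"] mono[of "Y - X" Y] by (simp add: Diff)

lemma outer_le: "Y \<in> D \<Longrightarrow> E \<subseteq> Y \<Longrightarrow> fa_outer D w E \<le> w Y"
  unfolding fa_outer_def by (rule cINF_lower) (auto intro: bdd_belowI2 nonneg)

lemma outer_greatest:
  "E \<subseteq> \<Omega> \<Longrightarrow> (\<And>Y. Y \<in> D \<Longrightarrow> E \<subseteq> Y \<Longrightarrow> c \<le> w Y) \<Longrightarrow> c \<le> fa_outer D w E"
  unfolding fa_outer_def by (rule cINF_greatest) auto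

lemma outer_nonneg: "E \<subseteq> \<Omega> \<Longrightarrow> 0 \<le> fa_outer D w E"
  by (rule outer_greatest) (auto intro: nonneg)

lemma outer_less_imp_cover:
  assumes "E \<subseteq> \<Omega>" "fa_outer D w E < c"
  obtains Y where "Y \<in> D" "E \<subseteq> Y" "w Y < c"
  using outer_greatest[of E c] assms by force

lemma inner_ge: "Y \<in> D \<Longrightarrow> Y \<subseteq> E \<Longrightarrow> w Y \<le> fa_inner D w E"
  unfolding fa_inner_def by (rule cSUP_upper) (auto intro!: bdd_aboveI2 mono sets_into_space)

lemma inner_least: "(\<And>Y. Y \<in> D \<Longrightarrow> Y \<subseteq> E \<Longrightarrow> w Y \<le> c) \<Longrightarrow> fa_inner D w E \<le> c"
  unfolding fa_inner_def by (rule cSUP_least) auto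

lemma inner_nonneg: "0 \<le> fa_inner D w E"
  using inner_ge[of "{}" E] by (simp add: empty_zero)

lemma inner_empty: "fa_inner D w {} = 0"
  using inner_least[of "{}" 0] inner_nonneg[of "{}"] by (simp add: empty_zero)

lemma outer_add:
  assumes "E1 \<union> E2 \<subseteq> \<Omega>" "P \<in> D" "E1 \<subseteq> P" "E2 \<inter> P = {}"
  shows "fa_outer D w (E1 \<union> E2) = fa_outer D w E1 + fa_outer D w E2"
proof (rule antisym)
  have "fa_outer D w (E1 \<union> E2) \<le> w Y1 + w Y2"
    if "Y1 \<in> D" "E1 \<subseteq> Y1" "Y2 \<in> D" "E2 \<subseteq> Y2" for Y1 Y2
  proof -
    have "fa_outer D w (E1 \<union> E2) \<le> w (Y1 \<union> Y2)"
      using that by (intro outer_le) auto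
    also have "\<dots> \<le> w Y1 + w Y2"
      using that by (intro subadditive)
    finally show ?thesis .
  qed
  then have "fa_outer D w (E1 \<union> E2) - w Y2 \<le> fa_outer D w E1" if "Y2 \<in> D" "E2 \<subseteq> Y2" for Y2
    using assms(1) that by (intro outer_greatest) (auto simp: algebra_simps)
  then have "fa_outer D w (E1 \<union> E2) - fa_outer D w E1 \<le> fa_outer D w E2"
    using assms(1) by (intro outer_greatest) (auto simp: algebra_simps)
  then show "fa_outer D w (E1 \<union> E2) \<le> fa_outer D w E1 + fa_outer D w E2"
    by simp
next
  show "fa_outer D w E1 + fa_outer D w E2 \<le> fa_outer D w (E1 \<union> E2)"
  proof (rule outer_greatest)
    fix Y assume Y: "Y \<in> D" "E1 \<union> E2 \<subseteq> Y"
    have "fa_outer D w E1 \<le> w (Y \<inter> P)" "fa_outer D w E2 \<le> w (Y - P)"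
      using Y assms by (auto intro!: outer_le)
    then show "fa_outer D w E1 + fa_outer D w E2 \<le> w Y"
      using add_Int_Diff[OF Y(1) assms(2)] by simp
  qed fact
qed

lemma inner_add:
  assumes "P \<in> D" "F1 \<subseteq> P" "F2 \<inter> P = {}"
  shows "fa_inner D w (F1 \<union> F2) = fa_inner D w F1 + fa_inner D w F2"
proof (rule antisym)
  show "fa_inner D w (F1 \<union> F2) \<le> fa_inner D w F1 + fa_inner D w F2"
  proof (rule inner_least)
    fix Y assume Y: "Y \<in> D" "Y \<subseteq> F1 \<union> F2"
    have "w (Y \<inter> P) \<le> fa_inner D w F1" "w (Y - P) \<le> fa_inner D w F2"
      using Y assms by (auto intro!: inner_ge)
    then show "w Y \<le> fa_inner D w F1 + fa_inner D w F2"
      using add_Int_Diff[OF Y(1) assms(1)] by simp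
  qed
next
  have "w Y1 + w Y2 \<le> fa_inner D w (F1 \<union> F2)"
    if "Y1 \<in> D" "Y1 \<subseteq> F1" "Y2 \<in> D" "Y2 \<subseteq> F2" for Y1 Y2
  proof -
    have "w Y1 + w Y2 = w (Y1 \<union> Y2)"
      using that assms by (intro additive[symmetric]) auto
    also have "\<dots> \<le> fa_inner D w (F1 \<union> F2)"
      using that by (intro inner_ge) auto
    finally show ?thesis .
  qed
  then have "fa_inner D w F1 \<le> fa_inner D w (F1 \<union> F2) - w Y2" if "Y2 \<in> D" "Y2 \<subseteq> F2" for Y2
    using that by (intro inner_least) (auto simp: algebra_simps)
  then have "fa_inner D w F2 \<le> fa_inner D w (F1 \<union> F2) - fa_inner D w F1"
    by (intro inner_least) (auto simp: algebra_simps)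
  then show "fa_inner D w F1 + fa_inner D w F2 \<le> fa_inner D w (F1 \<union> F2)"
    by simp
qed

lemma outer_Int_plus_inner_Diff:
  assumes P: "P \<in> D"
  shows "fa_outer D w (P \<inter> Z) + fa_inner D w (P - Z) = w P"
proof (rule antisym)
  have "fa_inner D w (P - Z) \<le> w P - fa_outer D w (P \<inter> Z)"
  proof (rule inner_least)
    fix Y assume Y: "Y \<in> D" "Y \<subseteq> P - Z"
    then have "P \<inter> Y = Y"
      by blast
    then have "w P = w Y + w (P - Y)"
      using add_Int_Diff[OF P Y(1)] by simp
    moreover have "fa_outer D w (P \<inter> Z) \<le> w (P - Y)"
      using P Y by (intro outer_le) auto
    ultimately show "w Y \<le> w P - fa_outer D w (P \<inter> Z)"
      by simp
  qed
  then show "fa_outer D w (P \<inter> Z) + fa_inner D w (P - Z) \<le> w P"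
    by simp
next
  have "w P - fa_inner D w (P - Z) \<le> fa_outer D w (P \<inter> Z)"
  proof (rule outer_greatest)
    fix Y assume Y: "Y \<in> D" "P \<inter> Z \<subseteq> Y"
    then have "w (P - Y) \<le> fa_inner D w (P - Z)"
      using P by (intro inner_ge) auto
    moreover have "w (P \<inter> Y) \<le> w Y"
      using P Y by (intro mono) auto
    ultimately show "w P - fa_inner D w (P - Z) \<le> w Y"
      using add_Int_Diff[OF P Y(1)] by simp
  qed (use P sets_into_space in blast)
  then show "w P \<le> fa_outer D w (P \<inter> Z) + fa_inner D w (P - Z)"
    by simp
qed

lemma algebra_adjoin:
  assumes "Z \<subseteq> \<Omega>"
  shows "algebra \<Omega> {(P \<inter> Z) \<union> (Q - Z) | P Q. P \<in> D \<and> Q \<in> D}"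
    (is "algebra \<Omega> ?D'")
  unfolding algebra_iff_Un
proof (intro conjI ballI)
  show "?D' \<subseteq> Pow \<Omega>"
    using assms sets_into_space by blast
  have "{} = ({} \<inter> Z) \<union> ({} - Z)"
    by simp
  then show "{} \<in> ?D'"
    by blast
next
  fix X assume "X \<in> ?D'"
  then obtain P Q where "P \<in> D" "Q \<in> D" "X = (P \<inter> Z) \<union> (Q - Z)"
    by blast
  moreover have "\<Omega> - X = ((\<Omega> - P) \<inter> Z) \<union> ((\<Omega> - Q) - Z)"
    using calculation assms by blast
  ultimately show "\<Omega> - X \<in> ?D'"
    by blast
next
  fix X Y assume "X \<in> ?D'" "Y \<in> ?D'"
  then obtain P Q P' Q' where "P \<in> D" "Q \<in> D" "X = (P \<inter> Z) \<union> (Q - Z)"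
    "P' \<in> D" "Q' \<in> D" "Y = (P' \<inter> Z) \<union> (Q' - Z)"
    by blast
  moreover have "X \<union> Y = ((P \<union> P') \<inter> Z) \<union> ((Q \<union> Q') - Z)"
    using calculation by blast
  ultimately show "X \<union> Y \<in> ?D'"
    by blast
qed

lemma extend_to_set:
  assumes Z: "Z \<subseteq> \<Omega>"
  obtains D' w' where "fa_measure \<Omega> D' w'" "D \<subseteq> D'" "Z \<in> D'" "\<forall>P\<in>D. w' P = w P"
    "w' Z = fa_outer D w Z"
proof
  \<comment> \<open>The classical one-set extension of Los and Marczewski.\<close>
  define D' where "D' = {(P \<inter> Z) \<union> (Q - Z) | P Q. P \<in> D \<and> Q \<in> D}"
  define w' where "w' E = fa_outer D w (E \<inter> Z) + fa_inner D w (E - Z)" for E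
  show "fa_measure \<Omega> D' w'"
  proof (rule fa_measure.intro)
    show "algebra \<Omega> D'"
      unfolding D'_def using Z by (rule algebra_adjoin)
    show "fa_measure_axioms D' w'"
    proof
      fix X assume "X \<in> D'"
      then show "0 \<le> w' X"
        unfolding w'_def using outer_nonneg[of "X \<inter> Z"] inner_nonneg Z by force
    next
      fix X Y assume "X \<in> D'" "Y \<in> D'" and disj: "X \<inter> Y = {}"
      then obtain P Q P' Q' where PQ: "P \<in> D" "Q \<in> D" "X = (P \<inter> Z) \<union> (Q - Z)"
        and "P' \<in> D" "Q' \<in> D" "Y = (P' \<inter> Z) \<union> (Q' - Z)"
        unfolding D'_def by blast
      have "fa_outer D w ((X \<inter> Z) \<union> (Y \<inter> Z)) = fa_outer D w (X \<inter> Z) + fa_outer D w (Y \<inter> Z)"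
        using disj PQ Z by (intro outer_add[of _ _ P]) auto
      moreover have "fa_inner D w ((X - Z) \<union> (Y - Z)) = fa_inner D w (X - Z) + fa_inner D w (Y - Z)"
        using disj PQ by (intro inner_add[of Q]) auto
      ultimately show "w' (X \<union> Y) = w' X + w' Y"
        unfolding w'_def by (simp add: Int_Un_distrib2 Un_Diff)
    qed
  qed
  show "D \<subseteq> D'"
    unfolding D'_def by (force simp: Int_Diff_Un)
  have "Z = (\<Omega> \<inter> Z) \<union> ({} - Z)"
    using Z by blast
  then show "Z \<in> D'"
    unfolding D'_def by blast
  show "\<forall>P\<in>D. w' P = w P"
    unfolding w'_def using outer_Int_plus_inner_Diff by blast
  show "w' Z = fa_outer D w Z"
    unfolding w'_def by (simp add: inner_empty)
qed

end

definition graph_on :: "'a set \<Rightarrow> ('a \<Rightarrow> 'b) \<Rightarrow> ('a \<times> 'b) set" where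
  "graph_on D f = (\<lambda>x. (x, f x)) ` D"

lemma mem_graph_on [simp]: "(x, y) \<in> graph_on D f \<longleftrightarrow> x \<in> D \<and> y = f x"
  unfolding graph_on_def by auto

lemma Domain_graph_on [simp]: "Domain (graph_on D f) = D"
  unfolding graph_on_def by force

lemma graph_on_subset_iff: "graph_on D f \<subseteq> graph_on D' f' \<longleftrightarrow> D \<subseteq> D' \<and> (\<forall>x\<in>D. f' x = f x)"
  unfolding graph_on_def by auto

lemma single_valued_eq_graph_on:
  assumes "single_valued G"
  shows "G = graph_on (Domain G) (\<lambda>x. THE y. (x, y) \<in> G)"
proof (rule subset_antisym)
  show "G \<subseteq> graph_on (Domain G) (\<lambda>x. THE y. (x, y) \<in> G)"
  proof (rule subrelI)
    fix x y assume "(x, y) \<in> G"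
    moreover from this assms have "(THE y. (x, y) \<in> G) = y"
      unfolding single_valued_def by blast
    ultimately show "(x, y) \<in> graph_on (Domain G) (\<lambda>x. THE y. (x, y) \<in> G)"
      by auto
  qed
  show "graph_on (Domain G) (\<lambda>x. THE y. (x, y) \<in> G) \<subseteq> G"
    using assms unfolding single_valued_def graph_on_def by (auto intro: theI)
qed

text \<open>A partial finitely additive measure is handled through its graph, so that Zorn's lemma
  for \<open>\<subseteq>\<close> applies and the upper bound of a chain is simply its union.\<close>

definition measure_graph :: "'a set \<Rightarrow> ('a set \<times> real) set \<Rightarrow> bool" where
  "measure_graph \<Omega> G \<longleftrightarrow> single_valued G \<and> algebra \<Omega> (Domain G) \<and> (\<forall>(X, r)\<in>G. 0 \<le> r) \<and>
     (\<forall>(X, r)\<in>G. \<forall>(Y, s)\<in>G. X \<inter> Y = {} \<longrightarrow> (X \<union> Y, r + s) \<in> G)"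

lemma measure_graph_graph_on: "measure_graph \<Omega> (graph_on D w) \<longleftrightarrow> fa_measure \<Omega> D w"
proof -
  have ball: "(\<forall>(X, r)\<in>graph_on D w. P X r) \<longleftrightarrow> (\<forall>X\<in>D. P X (w X))" for P
    unfolding graph_on_def by auto
  have "single_valued (graph_on D w)"
    by (auto simp: single_valued_def)
  then show ?thesis
    unfolding measure_graph_def ball fa_measure_def fa_measure_axioms_def
    by (auto simp: algebra_iff_Un)
qed

lemma measure_graph_eq_graph_on:
  assumes "measure_graph \<Omega> G"
  obtains w where "G = graph_on (Domain G) w" "fa_measure \<Omega> (Domain G) w"
proof -
  have "G = graph_on (Domain G) (\<lambda>x. THE y. (x, y) \<in> G)"
    using assms unfolding measure_graph_def by (intro single_valued_eq_graph_on) simp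
  moreover from this have "fa_measure \<Omega> (Domain G) (\<lambda>x. THE y. (x, y) \<in> G)"
    using assms measure_graph_graph_on by metis
  ultimately show thesis
    by (rule that)
qed

lemma measure_graph_Union:
  assumes "C \<noteq> {}" "chain\<^sub>\<subseteq> C" "\<And>G. G \<in> C \<Longrightarrow> measure_graph \<Omega> G"
  shows "measure_graph \<Omega> (\<Union>C)"
proof -
  have common: "\<exists>G\<in>C. p \<in> G \<and> q \<in> G" if "p \<in> \<Union>C" "q \<in> \<Union>C" for p q
    using that assms(2) unfolding chain_subset_def by blast
  have alg: "Domain G \<subseteq> Pow \<Omega>" "{} \<in> Domain G" "\<And>X. X \<in> Domain G \<Longrightarrow> \<Omega> - X \<in> Domain G"
    "\<And>X Y. X \<in> Domain G \<Longrightarrow> Y \<in> Domain G \<Longrightarrow> X \<union> Y \<in> Domain G" if "G \<in> C" for G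
    using assms(3)[OF that] unfolding measure_graph_def algebra_iff_Un by blast+
  have "algebra \<Omega> (Domain (\<Union>C))"
    unfolding algebra_iff_Un
  proof (intro conjI ballI)
    show "Domain (\<Union>C) \<subseteq> Pow \<Omega>"
      using alg(1) by blast
    show "{} \<in> Domain (\<Union>C)"
      using assms(1) alg(2) by blast
    show "\<Omega> - X \<in> Domain (\<Union>C)" if "X \<in> Domain (\<Union>C)" for X
      using that alg(3) by blast
    show "X \<union> Y \<in> Domain (\<Union>C)" if XY: "X \<in> Domain (\<Union>C)" "Y \<in> Domain (\<Union>C)" for X Y
    proof -
      obtain r s where "(X, r) \<in> \<Union>C" "(Y, s) \<in> \<Union>C"
        using XY by blast
      then obtain G where "G \<in> C" "X \<in> Domain G" "Y \<in> Domain G"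
        using common by blast
      then show ?thesis
        using alg(4) by blast
    qed
  qed
  moreover have "single_valued (\<Union>C)"
  proof (rule single_valuedI)
    fix X r s assume "(X, r) \<in> \<Union>C" "(X, s) \<in> \<Union>C"
    moreover obtain G where "G \<in> C" "(X, r) \<in> G" "(X, s) \<in> G"
      using common calculation by blast
    ultimately show "r = s"
      using assms(3) unfolding measure_graph_def single_valued_def by blast
  qed
  moreover have "\<forall>(X, r)\<in>\<Union>C. 0 \<le> r"
    using assms(3) unfolding measure_graph_def by blast
  moreover have "(X \<union> Y, r + s) \<in> \<Union>C"
    if XY: "(X, r) \<in> \<Union>C" "(Y, s) \<in> \<Union>C" "X \<inter> Y = {}" for X r Y s
  proof -
    obtain G where "G \<in> C" "(X, r) \<in> G" "(Y, s) \<in> G"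
      using common XY(1,2) by blast
    then show ?thesis
      using assms(3) XY(3) unfolding measure_graph_def by blast
  qed
  ultimately show ?thesis
    unfolding measure_graph_def by fast
qed

lemma measure_graph_maximal:
  assumes "measure_graph \<Omega> G0"
  obtains G where "measure_graph \<Omega> G" "G0 \<subseteq> G" "\<And>G'. measure_graph \<Omega> G' \<Longrightarrow> G \<subseteq> G' \<Longrightarrow> G' = G"
proof -
  define F where "F = {G. measure_graph \<Omega> G \<and> G0 \<subseteq> G}"
  have "\<exists>U\<in>F. \<forall>G\<in>C. G \<subseteq> U" if C: "C \<in> chains F" for C
  proof (cases "C = {}")
    case True
    then show ?thesis
      using assms unfolding F_def by blast
  next
    case False
    have "C \<subseteq> F" "chain\<^sub>\<subseteq> C"
      using C unfolding chains_def by blast+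
    then have "\<Union>C \<in> F"
      unfolding F_def using measure_graph_Union[OF False] False by blast
    then show ?thesis
      by blast
  qed
  then have "\<exists>G\<in>F. \<forall>G'\<in>F. G \<subseteq> G' \<longrightarrow> G' = G"
    by (intro Zorn_Lemma2) blast
  then obtain G where G: "measure_graph \<Omega> G" "G0 \<subseteq> G" and max: "\<forall>G'\<in>F. G \<subseteq> G' \<longrightarrow> G' = G"
    unfolding F_def by blast
  show thesis
  proof (rule that[OF G])
    fix G' assume "measure_graph \<Omega> G'" "G \<subseteq> G'"
    with G(2) max show "G' = G"
      unfolding F_def by blast
  qed
qed

lemma Domain_maximal_measure_graph:
  assumes G: "measure_graph \<Omega> G" and max: "\<And>G'. measure_graph \<Omega> G' \<Longrightarrow> G \<subseteq> G' \<Longrightarrow> G' = G"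
  shows "Domain G = Pow \<Omega>"
proof (rule ccontr)
  obtain w where w: "G = graph_on (Domain G) w" "fa_measure \<Omega> (Domain G) w"
    using G by (rule measure_graph_eq_graph_on)
  assume "Domain G \<noteq> Pow \<Omega>"
  moreover have "Domain G \<subseteq> Pow \<Omega>"
    using G unfolding measure_graph_def algebra_iff_Un by blast
  ultimately obtain Z where Z: "Z \<subseteq> \<Omega>" "Z \<notin> Domain G"
    by (metis PowD subsetI subset_antisym)
  obtain D' w' where D'w': "fa_measure \<Omega> D' w'" "Domain G \<subseteq> D'" "Z \<in> D'"
    "\<forall>P\<in>Domain G. w' P = w P" "w' Z = fa_outer (Domain G) w Z"
    by (rule fa_measure.extend_to_set[OF w(2) Z(1)])
  have "G \<subseteq> graph_on D' w'"
    using D'w'(2,4) by (subst w(1)) (simp add: graph_on_subset_iff)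
  then have "graph_on D' w' = G"
    using max D'w'(1) measure_graph_graph_on by blast
  then have "Z \<in> Domain G"
    using D'w'(3) by auto
  with Z(2) show False ..
qed

lemma (in fa_measure) extend_to_Pow:
  obtains w' where "fa_measure \<Omega> (Pow \<Omega>) w'" "\<forall>P\<in>D. w' P = w P"
proof -
  have "measure_graph \<Omega> (graph_on D w)"
    using fa_measure_axioms measure_graph_graph_on by blast
  then obtain G where G: "measure_graph \<Omega> G" "graph_on D w \<subseteq> G"
    and max: "\<And>G'. measure_graph \<Omega> G' \<Longrightarrow> G \<subseteq> G' \<Longrightarrow> G' = G"
    by (rule measure_graph_maximal) blast
  from G(1) max have "Domain G = Pow \<Omega>"
    by (rule Domain_maximal_measure_graph)
  moreover obtain w' where "G = graph_on (Domain G) w'" "fa_measure \<Omega> (Domain G) w'"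
    using G(1) by (rule measure_graph_eq_graph_on)
  ultimately show thesis
    using G(2) that by (simp add: graph_on_subset_iff)
qed

lemma (in fa_measure) extend_with_outer:
  assumes "Z \<subseteq> \<Omega>"
  obtains w' where "fa_measure \<Omega> (Pow \<Omega>) w'" "\<forall>P\<in>D. w' P = w P" "w' Z = fa_outer D w Z"
proof -
  obtain D' w1 where w1: "fa_measure \<Omega> D' w1" "D \<subseteq> D'" "Z \<in> D'" "\<forall>P\<in>D. w1 P = w P"
    "w1 Z = fa_outer D w Z"
    by (rule extend_to_set[OF assms])
  obtain w' where "fa_measure \<Omega> (Pow \<Omega>) w'" "\<forall>P\<in>D'. w' P = w1 P"
    by (rule fa_measure.extend_to_Pow[OF w1(1)])
  moreover have "\<forall>P\<in>D. w' P = w P" "w' Z = fa_outer D w Z"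
    using calculation(2) w1(2-5) by auto
  ultimately show thesis
    using that by blast
qed

section \<open>Renaming variables and definable sets\<close>

fun trename :: "(nat \<Rightarrow> nat) \<Rightarrow> 'f trm \<Rightarrow> 'f trm" where
  "trename g (Var v) = Var (g v)"
| "trename g (Fn f ts) = Fn f (map (trename g) ts)"

fun frename :: "(nat \<Rightarrow> nat) \<Rightarrow> ('f, 'r) fm \<Rightarrow> ('f, 'r) fm" where
  "frename g (Eq s t) = Eq (trename g s) (trename g t)"
| "frename g (Rel r ts) = Rel r (map (trename g) ts)"
| "frename g (Neg p) = Neg (frename g p)"
| "frename g (Conj p q) = Conj (frename g p) (frename g q)"
| "frename g (Ex v p) = Ex (g v) (frename g p)"

lemma tval_trename: "tval M e (trename g t) = tval M (e \<circ> g) t"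
  by (induction t) (simp_all cong: map_cong)

lemma tvars_trename: "tvars (trename g t) = g ` tvars t"
  by (induction t) auto

lemma sat_frename: "inj g \<Longrightarrow> sat M (frename g p) e = sat M p (e \<circ> g)"
proof (induction p arbitrary: e)
  case (Ex v p)
  have "(e(g v := a)) \<circ> g = (e \<circ> g)(v := a)" for a
    using Ex.prems by (auto simp: fun_eq_iff inj_eq)
  then show ?case
    by (simp only: frename.simps sat.simps Ex.IH[OF Ex.prems])
qed (simp_all add: tval_trename comp_def)

lemma fvars_frename: "inj g \<Longrightarrow> fvars (frename g p) = g ` fvars p"
  by (induction p) (auto simp: tvars_trename inj_eq)

lemma tval_cong: "(\<And>v. v \<in> tvars t \<Longrightarrow> e v = e' v) \<Longrightarrow> tval M e t = tval M e' t"
proof (induction t)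
  case (Fn f ts)
  then have "map (tval M e) ts = map (tval M e') ts"
    by (intro map_cong) auto
  then show ?case
    by (simp only: tval.simps)
qed simp

lemma sat_cong: "(\<And>v. v \<in> fvars p \<Longrightarrow> e v = e' v) \<Longrightarrow> sat M p e = sat M p e'"
proof (induction p arbitrary: e e')
  case (Eq s t)
  then show ?case
    using tval_cong[of s e e' M] tval_cong[of t e e' M] by simp
next
  case (Rel r ts)
  then have "map (tval M e) ts = map (tval M e') ts"
    by (intro map_cong refl tval_cong) auto
  then show ?case
    by (simp only: sat.simps)
next
  case (Neg p)
  show ?case
    using Neg.prems Neg.IH[of e e'] by simp
next
  case (Conj p q)
  show ?case
    using Conj.prems Conj.IH(1)[of e e'] Conj.IH(2)[of e e'] by simp
next
  case (Ex v p)
  have "sat M p (e(v := a)) = sat M p (e'(v := a))" for a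
    using Ex.prems by (intro Ex.IH) simp
  then show ?case
    by simp
qed

lemma definable_subset: "definable M C k X \<Longrightarrow> X \<subseteq> {a. length a = k}"
  unfolding definable_def by blast

lemma definable_mono: "C \<subseteq> C' \<Longrightarrow> definable M C k X \<Longrightarrow> definable M C' k X"
  unfolding definable_def by blast

lemma definable_all: "definable M C k {a. length a = k}"
  unfolding definable_def
  by (rule exI[of _ "Ex 0 (Eq (Var 0) (Var 0))"], rule exI[of _ "[]"]) simp

lemma definable_compl:
  assumes "definable M C k X"
  shows "definable M C k ({a. length a = k} - X)"
proof -
  obtain \<phi> ps where "set ps \<subseteq> C" "\<forall>v\<in>fvars \<phi>. v < k + length ps"
    and "X = {a. length a = k \<and> sat M \<phi> (\<lambda>i. (a @ ps) ! i)}"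
    using assms unfolding definable_def by blast
  then show ?thesis
    unfolding definable_def by (intro exI[of _ "Neg \<phi>"] exI[of _ ps]) auto
qed

lemma definable_Int:
  assumes "definable M C k X" "definable M C k Y"
  shows "definable M C k (X \<inter> Y)"
proof -
  obtain \<phi> ps where ps: "set ps \<subseteq> C" and \<phi>: "\<forall>v\<in>fvars \<phi>. v < k + length ps"
    and X: "X = {a. length a = k \<and> sat M \<phi> (\<lambda>i. (a @ ps) ! i)}"
    using assms(1) unfolding definable_def by blast
  obtain \<psi> qs where qs: "set qs \<subseteq> C" and \<psi>: "\<forall>v\<in>fvars \<psi>. v < k + length qs"
    and Y: "Y = {a. length a = k \<and> sat M \<psi> (\<lambda>i. (a @ qs) ! i)}"
    using assms(2) unfolding definable_def by blast
  define g where "g j = (if j < k then j else j + length ps)" for j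
  have "inj g"
    unfolding inj_def g_def by auto
  have "sat M \<phi> (\<lambda>i. (a @ ps @ qs) ! i) = sat M \<phi> (\<lambda>i. (a @ ps) ! i)" if "length a = k" for a
    using \<phi> that by (intro sat_cong) (auto simp: nth_append)
  moreover have "sat M (frename g \<psi>) (\<lambda>i. (a @ ps @ qs) ! i) = sat M \<psi> (\<lambda>i. (a @ qs) ! i)"
    if "length a = k" for a
    unfolding sat_frename[OF \<open>inj g\<close>] using \<psi> that by (intro sat_cong) (auto simp: nth_append g_def)
  moreover have "\<forall>v\<in>fvars (Conj \<phi> (frename g \<psi>)). v < k + length (ps @ qs)"
    using \<phi> \<psi> by (auto simp: fvars_frename[OF \<open>inj g\<close>] g_def)
  ultimately show ?thesis
    unfolding definable_def X Y using ps qs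
    by (intro exI[of _ "Conj \<phi> (frename g \<psi>)"] exI[of _ "ps @ qs"]) auto
qed

lemma definable_reindex:
  assumes "definable M C k X" "inj_on f {..<k}" "f ` {..<k} \<subseteq> {..<j}"
  shows "definable M C j {a. length a = j \<and> map (\<lambda>i. a ! f i) [0..<k] \<in> X}"
proof -
  obtain \<phi> ps where ps: "set ps \<subseteq> C" and \<phi>: "\<forall>v\<in>fvars \<phi>. v < k + length ps"
    and X: "X = {a. length a = k \<and> sat M \<phi> (\<lambda>i. (a @ ps) ! i)}"
    using assms(1) unfolding definable_def by blast
  define L where "L = length ps"
  \<comment> \<open>The parameters move behind the \<open>j\<close> new tuple variables; all remaining (bound) variables
    are moved out of the way to keep \<open>g\<close> injective.\<close>
  define g where "g i = (if i < k then f i else if i < k + L then i - k + j else i + j + L)" for i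
  have f_less: "f i < j" if "i < k" for i
    using assms(3) that by auto
  have "inj g"
    using assms(2) unfolding inj_def inj_on_def g_def by (auto dest: f_less)
  have "sat M (frename g \<phi>) (\<lambda>i. (a @ ps) ! i) =
      sat M \<phi> (\<lambda>i. (map (\<lambda>i. a ! f i) [0..<k] @ ps) ! i)" if "length a = j" for a
    unfolding sat_frename[OF \<open>inj g\<close>] using \<phi> that
    by (intro sat_cong) (auto simp: nth_append g_def L_def dest: f_less)
  moreover have "\<forall>v\<in>fvars (frename g \<phi>). v < j + length ps"
    using \<phi> by (auto simp: fvars_frename[OF \<open>inj g\<close>] g_def L_def dest: f_less)
  ultimately show ?thesis
    unfolding definable_def X using ps
    by (intro exI[of _ "frename g \<phi>"] exI[of _ ps]) auto
qed

lemma definable_take_image_Suc: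
  assumes "definable M C (Suc k) W"
  shows "definable M C k (take k ` W)"
proof -
  obtain \<phi> ps where ps: "set ps \<subseteq> C" and \<phi>: "\<forall>v\<in>fvars \<phi>. v < Suc k + length ps"
    and W: "W = {c. length c = Suc k \<and> sat M \<phi> (\<lambda>i. (c @ ps) ! i)}"
    using assms unfolding definable_def by blast
  define L where "L = length ps"
  \<comment> \<open>The last tuple variable \<open>k\<close> moves behind the parameters, to \<open>k + L\<close>, where it is quantified.\<close>
  define g where "g i = (if i < k then i else if i = k then k + L else if i \<le> k + L then i - 1 else i)"
    for i
  have "inj g"
    unfolding inj_def g_def by auto
  have "sat M (Ex (k + L) (frename g \<phi>)) (\<lambda>i. (a @ ps) ! i) \<longleftrightarrow>
      (\<exists>x. sat M \<phi> (\<lambda>i. ((a @ [x]) @ ps) ! i))" if "length a = k" for a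
  proof -
    have "sat M \<phi> ((\<lambda>i. (a @ ps) ! i)(k + L := x) \<circ> g) = sat M \<phi> (\<lambda>i. ((a @ [x]) @ ps) ! i)" for x
      using \<phi> that by (intro sat_cong) (auto simp: g_def L_def nth_append nth_Cons')
    then show ?thesis
      by (simp add: sat_frename[OF \<open>inj g\<close>])
  qed
  moreover have "take k ` W = {a. length a = k \<and> (\<exists>x. a @ [x] \<in> W)}"
  proof (intro set_eqI iffI)
    fix a assume "a \<in> take k ` W"
    then obtain c where c: "c \<in> W" "a = take k c"
      by blast
    then have "length c = Suc k"
      using W by simp
    then have "a @ [c ! k] = c" "length a = k"
      using c(2) by (simp_all add: take_Suc_conv_app_nth[symmetric])
    then show "a \<in> {a. length a = k \<and> (\<exists>x. a @ [x] \<in> W)}"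
      using c(1) by (metis (mono_tags) mem_Collect_eq)
  next
    fix a assume "a \<in> {a. length a = k \<and> (\<exists>x. a @ [x] \<in> W)}"
    then show "a \<in> take k ` W"
      by (auto intro: image_eqI[of _ _ "a @ [_]"])
  qed
  moreover have "\<forall>v\<in>fvars (Ex (k + L) (frename g \<phi>)). v < k + length ps"
    using \<phi> by (auto simp: fvars_frename[OF \<open>inj g\<close>] g_def L_def)
  ultimately show ?thesis
    unfolding definable_def W using ps
    by (intro exI[of _ "Ex (k + L) (frename g \<phi>)"] exI[of _ ps]) auto
qed

lemma definable_take_image:
  "definable M C (n + m) W \<Longrightarrow> definable M C n (take n ` W)"
proof (induction m arbitrary: W)
  case 0
  then have "take n ` W = W"
    using definable_subset[of M C n W] by (force simp: subset_eq)
  with 0 show ?case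
    by simp
next
  case (Suc m)
  then have "definable M C (n + m) (take (n + m) ` W)"
    by (intro definable_take_image_Suc) simp
  moreover have "take n ` take (n + m) ` W = take n ` W"
    by (simp add: image_image)
  ultimately show ?case
    using Suc.IH by metis
qed

lemma definable_vimage_take:
  fixes M :: "('f, 'r, 'u) struc"
  assumes "definable M C n X"
  shows "definable M C (n + m) ({c. length c = n + m} \<inter> take n -` X)"
proof -
  have "map (\<lambda>i. c ! i) [0..<n] = take n c" if "length c = n + m" for c :: "'u list"
    using that by (intro nth_equalityI) auto
  then have "{c. length c = n + m} \<inter> take n -` X = {c. length c = n + m \<and> map (\<lambda>i. c ! i) [0..<n] \<in> X}"
    by (auto simp del: map_nth)
  also have "definable M C (n + m) \<dots>"
    using assms by (rule definable_reindex) auto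
  finally show ?thesis .
qed

lemma definable_vimage_drop:
  fixes M :: "('f, 'r, 'u) struc"
  assumes "definable M C m Y"
  shows "definable M C (n + m) ({c. length c = n + m} \<inter> drop n -` Y)"
proof -
  have "map (\<lambda>i. c ! (n + i)) [0..<m] = drop n c" if "length c = n + m" for c :: "'u list"
    using that by (intro nth_equalityI) auto
  then have "{c. length c = n + m} \<inter> drop n -` Y =
      {c. length c = n + m \<and> map (\<lambda>i. c ! (n + i)) [0..<m] \<in> Y}"
    by (auto simp del: map_nth)
  also have "definable M C (n + m) \<dots>"
    using assms by (rule definable_reindex) (auto simp: inj_on_def)
  finally show ?thesis .
qed

lemma definable_drop_image:
  fixes M :: "('f, 'r, 'u) struc"
  assumes "definable M C (n + m) W"
  shows "definable M C m (drop n ` W)"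
proof -
  \<comment> \<open>Swapping the two blocks of coordinates turns the projection to the last \<open>m\<close> coordinates
    into a projection to the first ones.\<close>
  define f where "f i = (if i < n then m + i else i - n)" for i
  define V where "V = {d. length d = m + n \<and> map (\<lambda>i. d ! f i) [0..<n + m] \<in> W}"
  have swap: "map (\<lambda>i. d ! f i) [0..<n + m] = drop m d @ take m d" if "length d = m + n" for d :: "'u list"
    using that by (intro nth_equalityI) (auto simp: f_def nth_append)
  have "definable M C (m + n) V"
    unfolding V_def using assms by (rule definable_reindex) (auto simp: f_def inj_on_def)
  then have "definable M C m (take m ` V)"
    by (rule definable_take_image)
  moreover have "drop n ` W = take m ` V"
  proof (intro set_eqI iffI)
    fix b assume "b \<in> drop n ` W"
    then obtain c where c: "c \<in> W" "b = drop n c"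
      by blast
    then have "length c = n + m"
      using assms definable_subset by blast
    then have "drop n c @ take n c \<in> V" "take m (drop n c @ take n c) = b"
      using c swap[of "drop n c @ take n c"] by (auto simp: V_def)
    then show "b \<in> take m ` V"
      by (metis image_eqI)
  next
    fix b assume "b \<in> take m ` V"
    then obtain d where d: "d \<in> V" "b = take m d"
      by blast
    then have "drop m d @ take m d \<in> W" "length d = m + n"
      using swap by (auto simp: V_def)
    then have "b = drop n (drop m d @ take m d)" "drop m d @ take m d \<in> W"
      using d(2) by auto
    then show "b \<in> drop n ` W"
      by blast
  qed
  ultimately show ?thesis
    by simp
qed

section \<open>Smooth Keisler measures\<close>

lemma algebra_definable: "algebra {a. length a = k} {X. definable M C k X}"
  unfolding algebra_iff_Un
proof (intro conjI ballI)
  show "{X. definable M C k X} \<subseteq> Pow {a. length a = k}"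
    using definable_subset by blast
  show "{} \<in> {X. definable M C k X}"
    using definable_compl[OF definable_all, of M C k] by simp
  show "{a. length a = k} - X \<in> {X. definable M C k X}" if "X \<in> {X. definable M C k X}" for X
    using that definable_compl by blast
  show "X \<union> Y \<in> {X. definable M C k X}"
    if "X \<in> {X. definable M C k X}" "Y \<in> {X. definable M C k X}" for X Y
  proof -
    have "X \<union> Y = {a. length a = k} - (({a. length a = k} - X) \<inter> ({a. length a = k} - Y))"
      using that definable_subset by blast
    then show ?thesis
      using that by (simp add: definable_compl definable_Int)
  qed
qed

lemma keisler_fa_measure: "keisler M C k w \<Longrightarrow> fa_measure {a. length a = k} {X. definable M C k X} w"
  unfolding fa_measure_def fa_measure_axioms_def keisler_def using algebra_definable by blast

lemma keisler_mono:
  "keisler M C k w \<Longrightarrow> definable M C k X \<Longrightarrow> definable M C k Y \<Longrightarrow> X \<subseteq> Y \<Longrightarrow> w X \<le> w Y"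
  using fa_measure.mono[OF keisler_fa_measure] by blast

lemma keisler_of_fa_measure_Pow:
  assumes "fa_measure {a. length a = k} (Pow {a. length a = k}) w" "w {a. length a = k} = 1"
  shows "keisler M C k w"
  unfolding keisler_def
proof (intro conjI allI impI)
  show "0 \<le> w X" if "definable M C k X" for X
    using fa_measure.nonneg[OF assms(1)] definable_subset[OF that] by blast
  show "w (X \<union> Y) = w X + w Y"
    if "definable M C k X \<and> definable M C k Y \<and> X \<inter> Y = {}" for X Y
    using fa_measure.additive[OF assms(1)] definable_subset[of M C k] that by blast
qed fact

lemma smooth_local_outer_plus_outer_compl:
  fixes M :: "('f, 'r, 'u) struc"
  assumes lam: "keisler M A k lam" "smooth_local M A k lam" and Z: "definable M UNIV k Z"
  shows "fa_outer {X. definable M A k X} lam Z +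
      fa_outer {X. definable M A k X} lam ({a. length a = k} - Z) = 1"
proof -
  let ?S = "{a :: 'u list. length a = k}" and ?D = "{X. definable M A k X}"
  interpret fa_measure ?S ?D lam
    using lam(1) by (rule keisler_fa_measure)
  have Z_S: "Z \<subseteq> ?S"
    using Z by (rule definable_subset)
  obtain w1 where w1: "fa_measure ?S (Pow ?S) w1" "\<forall>P\<in>?D. w1 P = lam P"
    "w1 Z = fa_outer ?D lam Z"
    using Z_S by (rule extend_with_outer)
  obtain w2 where w2: "fa_measure ?S (Pow ?S) w2" "\<forall>P\<in>?D. w2 P = lam P"
    "w2 (?S - Z) = fa_outer ?D lam (?S - Z)"
    by (rule extend_with_outer[of "?S - Z"]) blast
  have "lam ?S = 1"
    using lam(1) unfolding keisler_def by blast
  then have "w1 ?S = 1" "w2 ?S = 1"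
    using w1(2) w2(2) top by auto
  then have "keisler M UNIV k w1" "keisler M UNIV k w2"
    using w1(1) w2(1) by (auto intro: keisler_of_fa_measure_Pow)
  moreover have "agree M A k w1 lam" "agree M A k w2 lam"
    using w1(2) w2(2) unfolding agree_def by auto
  ultimately have "w1 Z = w2 Z"
    using lam(2) Z unfolding smooth_local_def agree_def by blast
  moreover have "w2 ?S = w2 Z + w2 (?S - Z)"
    using fa_measure.additive[OF w2(1), of Z "?S - Z"] Z_S by (simp add: Un_absorb1)
  ultimately show ?thesis
    using w1(3) w2(3) \<open>w2 ?S = 1\<close> by simp
qed

lemma smooth_local_approx:
  fixes M :: "('f, 'r, 'u) struc"
  assumes lam: "keisler M A k lam" "smooth_local M A k lam"
    and Z: "definable M UNIV k Z" and "0 < e"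
  obtains W1 W2 where "definable M A k W1" "definable M A k W2" "W1 \<subseteq> Z" "Z \<subseteq> W2"
    "lam W2 - lam W1 < e"
proof -
  let ?S = "{a :: 'u list. length a = k}" and ?D = "{X. definable M A k X}"
  interpret fa_measure ?S ?D lam
    using lam(1) by (rule keisler_fa_measure)
  have Z_S: "Z \<subseteq> ?S"
    using Z by (rule definable_subset)
  obtain W2 where W2: "W2 \<in> ?D" "Z \<subseteq> W2" "lam W2 < fa_outer ?D lam Z + e / 2"
    by (rule outer_less_imp_cover[OF Z_S]) (use \<open>0 < e\<close> in auto)
  obtain W3 where W3: "W3 \<in> ?D" "?S - Z \<subseteq> W3" "lam W3 < fa_outer ?D lam (?S - Z) + e / 2"
    by (rule outer_less_imp_cover[of "?S - Z"]) (use \<open>0 < e\<close> in auto)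
  have "(?S - W3) \<union> W3 = ?S"
    using sets_into_space[OF W3(1)] by blast
  then have "lam ?S = lam (?S - W3) + lam W3"
    using W3(1) additive[of "?S - W3" W3] compl_sets by auto
  moreover have "lam ?S = 1"
    using lam(1) unfolding keisler_def by blast
  ultimately have "lam W2 - lam (?S - W3) < e"
    using W2(3) W3(3) smooth_local_outer_plus_outer_compl[OF lam Z] by linarith
  moreover have "?S - W3 \<in> ?D" "?S - W3 \<subseteq> Z"
    using W3(1,2) by (auto simp: definable_compl)
  ultimately show thesis
    using W2(1,2) that by blast
qed

lemma pushforward_squeeze:
  fixes M :: "('f, 'r, 'u) struc" and p :: "'u list \<Rightarrow> 'u list"
  assumes lam: "keisler M A k lam" "smooth_local M A k lam"
    and w: "keisler M UNIV k w" "agree M A k w lam"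
    and vimage: "\<And>C X. definable M C j X \<Longrightarrow> definable M C k ({c. length c = k} \<inter> p -` X)"
    and image: "\<And>W. definable M A k W \<Longrightarrow> definable M A j (p ` W)"
    and \<rho>: "keisler M UNIV j \<rho>" "agree M A j \<rho> (\<lambda>X. w ({c. length c = k} \<inter> p -` X))"
    and X: "definable M UNIV j X" and "0 < e"
  shows "\<bar>\<rho> X - w ({c. length c = k} \<inter> p -` X)\<bar> \<le> e"
proof -
  let ?cyl = "\<lambda>X. {c. length c = k} \<inter> p -` X"
  have UNIV: "definable M UNIV i X" if "definable M A i X" for i X
    using that by (rule definable_mono[rotated]) simp
  obtain W1 W2 where W: "definable M A k W1" "definable M A k W2" "W1 \<subseteq> ?cyl X" "?cyl X \<subseteq> W2"
    "lam W2 - lam W1 < e"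
    using smooth_local_approx[OF lam vimage[OF X] \<open>0 < e\<close>] by blast
  define P1 where "P1 = p ` W1"
  define P2 where "P2 = {b. length b = j} - p ` ({c. length c = k} - W2)"
  have P: "definable M A j P1" "definable M A j P2"
    unfolding P1_def P2_def using W(1,2) by (auto intro!: image definable_compl)
  have sub: "P1 \<subseteq> X" "W1 \<subseteq> ?cyl P1" "X \<subseteq> P2" "?cyl P2 \<subseteq> W2"
    using W(3,4) definable_subset[OF W(1)] definable_subset[OF X] unfolding P1_def P2_def by blast+
  have cyl: "definable M UNIV k (?cyl P1)" "definable M UNIV k (?cyl P2)"
    using P by (auto intro: vimage UNIV)
  have "w W1 \<le> w (?cyl P1)" "w (?cyl P2) \<le> w W2" "w W1 \<le> w (?cyl X)" "w (?cyl X) \<le> w W2"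
    using keisler_mono[OF w(1)] UNIV[OF W(1)] UNIV[OF W(2)] cyl vimage[OF X] sub W(3,4) by meson+
  moreover have "\<rho> P1 \<le> \<rho> X" "\<rho> X \<le> \<rho> P2"
    using keisler_mono[OF \<rho>(1)] UNIV[OF P(1)] UNIV[OF P(2)] X sub by meson+
  moreover have "\<rho> P1 = w (?cyl P1)" "\<rho> P2 = w (?cyl P2)"
    using \<rho>(2) P unfolding agree_def by auto
  moreover have "w W1 = lam W1" "w W2 = lam W2"
    using w(2) W(1,2) unfolding agree_def by auto
  ultimately show ?thesis
    using W(5) by linarith
qed

lemma smooth_global_pushforward:
  fixes M :: "('f, 'r, 'u) struc" and p :: "'u list \<Rightarrow> 'u list"
  assumes "keisler M A k lam" "smooth_local M A k lam" "keisler M UNIV k w" "agree M A k w lam"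
    and "\<And>C X. definable M C j X \<Longrightarrow> definable M C k ({c. length c = k} \<inter> p -` X)"
    and "\<And>W. definable M A k W \<Longrightarrow> definable M A j (p ` W)"
  shows "smooth_global M A j (\<lambda>X. w ({c. length c = k} \<inter> p -` X))"
  unfolding smooth_global_def agree_def[of M UNIV]
proof (intro allI impI)
  fix \<rho> X
  assume "keisler M UNIV j \<rho> \<and> agree M A j \<rho> (\<lambda>X. w ({c. length c = k} \<inter> p -` X))"
    and "definable M UNIV j X"
  then have "\<rho> X - w ({c. length c = k} \<inter> p -` X) = 0"
    using pushforward_squeeze[OF assms] by (intro dense_eq0_I) blast
  then show "\<rho> X = w ({c. length c = k} \<inter> p -` X)"
    by simp
qed

lemma pi_x_eq_pushforward:
  fixes w :: "'a list set \<Rightarrow> real"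
  shows "pi_x n m w = (\<lambda>X. w ({c. length c = n + m} \<inter> take n -` X))"
proof -
  have "{a @ b |a b. a \<in> X \<and> length a = n \<and> length b = m} = {c. length c = n + m} \<inter> take n -` X"
    for X :: "'a list set"
  proof (intro set_eqI iffI)
    fix c assume "c \<in> {c. length c = n + m} \<inter> take n -` X"
    then show "c \<in> {a @ b |a b. a \<in> X \<and> length a = n \<and> length b = m}"
      by (intro CollectI exI[of _ "take n c"] exI[of _ "drop n c"]) auto
  qed auto
  then show ?thesis
    unfolding pi_x_def by simp
qed

lemma pi_y_eq_pushforward:
  fixes w :: "'a list set \<Rightarrow> real"
  shows "pi_y n m w = (\<lambda>Y. w ({c. length c = n + m} \<inter> drop n -` Y))"
proof -
  have "{a @ b |a b. b \<in> Y \<and> length a = n \<and> length b = m} = {c. length c = n + m} \<inter> drop n -` Y"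
    for Y :: "'a list set"
  proof (intro set_eqI iffI)
    fix c assume "c \<in> {c. length c = n + m} \<inter> drop n -` Y"
    then show "c \<in> {a @ b |a b. b \<in> Y \<and> length a = n \<and> length b = m}"
      by (intro CollectI exI[of _ "take n c"] exI[of _ "drop n c"]) auto
  qed auto
  then show ?thesis
    unfolding pi_y_def by simp
qed

lemma smooth_global_pi_x:
  assumes "keisler M A (n + m) lam" "smooth_local M A (n + m) lam"
    and "keisler M UNIV (n + m) w" "agree M A (n + m) w lam"
  shows "smooth_global M A n (pi_x n m w)"
  unfolding pi_x_eq_pushforward
  by (rule smooth_global_pushforward[OF assms]) (simp_all add: definable_vimage_take definable_take_image)

lemma smooth_global_pi_y:
  assumes "keisler M A (n + m) lam" "smooth_local M A (n + m) lam"
    and "keisler M UNIV (n + m) w" "agree M A (n + m) w lam"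
  shows "smooth_global M A m (pi_y n m w)"
  unfolding pi_y_eq_pushforward
  by (rule smooth_global_pushforward[OF assms]) (simp_all add: definable_vimage_drop definable_drop_image)

lemma agree_pi_x:
  "agree M A (n + m) w lam \<Longrightarrow> agree M A n (pi_x n m w) (pi_x n m lam)"
  unfolding pi_x_eq_pushforward agree_def by (simp add: definable_vimage_take)

lemma agree_commute: "agree M C k \<mu> \<nu> \<longleftrightarrow> agree M C k \<nu> \<mu>"
  unfolding agree_def by auto

lemma smooth_global_cong:
  assumes eq: "agree M UNIV k \<mu> \<nu>" and smooth: "smooth_global M A k \<nu>"
  shows "smooth_global M A k \<mu>"
  unfolding smooth_global_def
proof (intro allI impI)
  fix \<mu>' assume \<mu>': "keisler M UNIV k \<mu>' \<and> agree M A k \<mu>' \<mu>"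
  then have "agree M A k \<mu>' \<nu>"
    using eq definable_mono[of A UNIV M k] unfolding agree_def by simp
  then have "agree M UNIV k \<mu>' \<nu>"
    using \<mu>' smooth unfolding smooth_global_def by blast
  then show "agree M UNIV k \<mu>' \<mu>"
    using eq unfolding agree_def by simp
qed

theorem proposition4p9:
  fixes M :: "('f, 'r, 'u) struc" and \<kappa> :: "'k rel" and A :: "'u set"
    and n m :: nat and \<mu> \<nu> lam :: "'u list set \<Rightarrow> real"
  assumes "monster M \<kappa>"
    and "small \<kappa> A"
    and "keisler M UNIV n \<mu>"
    and "keisler M UNIV m \<nu>"
    and "keisler M A (n + m) lam"
    and "witnesses M A n m lam \<mu> \<nu>"
    and "smooth_local M A (n + m) lam"
  shows "smooth_global M A n \<mu> \<and> smooth_global M A m \<nu>"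
proof -
  obtain w where w: "keisler M UNIV (n + m) w" "agree M A (n + m) w lam"
    using assms(7) unfolding smooth_local_def by blast
  have smooth_x: "smooth_global M A n (pi_x n m w)"
    using assms(5,7) w by (rule smooth_global_pi_x)
  have smooth_y: "smooth_global M A m (pi_y n m w)"
    using assms(5,7) w by (rule smooth_global_pi_y)
  have "agree M A n \<mu> (pi_x n m w)"
    using assms(6) agree_pi_x[OF w(2)] unfolding witnesses_def agree_def by simp
  then have \<mu>: "agree M UNIV n \<mu> (pi_x n m w)"
    using smooth_x assms(3) unfolding smooth_global_def by blast
  then have "agree M UNIV n (pi_x n m w) \<mu>"
    by (simp add: agree_commute)
  then have "agree M UNIV m (pi_y n m w) \<nu>"
    using assms(6) w unfolding witnesses_def by blast
  then have \<nu>: "agree M UNIV m \<nu> (pi_y n m w)"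
    by (simp add: agree_commute)
  show ?thesis
    using smooth_global_cong[OF \<mu> smooth_x] smooth_global_cong[OF \<nu> smooth_y] ..
qed

end
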